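(* Let $\sigma:\mathbf R\to\mathbf R$ be a non-decreasing $L$-Lipschitz function, let $A\in\mathbf R^{n\times k}$, $b\in\mathbf R^n$, let $h>0$ and let $\alpha\in(0,1)$. Define $\Xi:\mathbf R^k\to\mathbf R^k$ by $\Xi(x)=x-hA^\top\sigma(Ax+b)$, where $\sigma$ is applied componentwise. If \[h\,\|A\|^2\le 2\alpha/L,\] then $\Xi$ is $\alpha$-averaged.
   Context: $\mathbf R^k$ carries the Euclidean norm $\|\cdot\|$; $\|A\|$ denotes the spectral (operator) norm of $A$. An operator $T$ is non-expansive if $\|T(x)-T(y)\|\le\|x-y\|$ for all $x,y$. For $\alpha\in(0,1)$, an operator $\Xi:\mathbf R^k\to\mathbf R^k$ is called $\alpha$-averaged if there exists a non-expansive $T:\mathbf R^k\to\mathbf R^k$ with $\Xi=(1-\alpha)\mathrm{id}+\alpha T$. *)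

theory Defs
  imports "HOL-Analysis.Analysis"
begin

definition nonexpansive :: "('a::real_normed_vector \<Rightarrow> 'a) \<Rightarrow> bool" where
  "nonexpansive T \<longleftrightarrow> (\<forall>x y. norm (T x - T y) \<le> norm (x - y))"

definition averaged :: "real \<Rightarrow> ('a::real_normed_vector \<Rightarrow> 'a) \<Rightarrow> bool" where
  "averaged \<alpha> \<Xi> \<longleftrightarrow> (\<exists>T. nonexpansive T \<and> \<Xi> = (\<lambda>x. (1 - \<alpha>) *\<^sub>R x + \<alpha> *\<^sub>R T x))"

definition spectral_norm :: "real^'k^'n \<Rightarrow> real" where
  "spectral_norm A = onorm (\<lambda>x. A *v x)"

end

theory Submission
  imports Defs
begin

(* The map G x = A^T sigma(A x + b) satisfies
   norm (G x - G y)^2 <= L norm(A)^2 <G x - G y, x - y>: a monotone L-Lipschitz scalar function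
   satisfies (sigma p - sigma q)^2 <= L (sigma p - sigma q)(p - q), this survives the componentwise
   extension, and passing from F to A^T F (A x + b) costs the factor norm(A)^2. Expanding the
   square of the increments then shows that x - (h/alpha) G x is non-expansive whenever
   h L norm(A)^2 <= 2 alpha, and x - h G x = (1 - alpha) x + alpha (x - (h/alpha) G x). *)

(* K is the reciprocal of the usual cocoercivity constant, so that constant maps have K = 0. *)
definition cocoercive :: "real \<Rightarrow> ('a::real_inner \<Rightarrow> 'a) \<Rightarrow> bool" where
  "cocoercive K G \<longleftrightarrow> (\<forall>x y. (norm (G x - G y))\<^sup>2 \<le> K * ((G x - G y) \<bullet> (x - y)))"

lemma cocoercive_inner_nonneg:
  assumes "cocoercive K G" and "0 \<le> K"
  shows "0 \<le> (G x - G y) \<bullet> (x - y)"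
proof (cases "K = 0")
  case True
  with assms(1) have "G x = G y" by (simp add: cocoercive_def)
  then show ?thesis by simp
next
  case False
  have "0 \<le> K * ((G x - G y) \<bullet> (x - y))"
    using assms(1) unfolding cocoercive_def by (metis zero_le_power2 order_trans)
  then show ?thesis using False assms(2) by (simp add: zero_le_mult_iff)
qed

lemma mono_lipschitz_imp_cocoercive:
  fixes \<sigma> :: "real \<Rightarrow> real"
  assumes mono: "mono \<sigma>" and lip: "\<And>s t. \<bar>\<sigma> s - \<sigma> t\<bar> \<le> L * \<bar>s - t\<bar>"
  shows "cocoercive L \<sigma>"
  unfolding cocoercive_def real_norm_def inner_real_def
proof (intro allI)
  fix p q :: real
  have "0 \<le> (\<sigma> p - \<sigma> q) * (p - q)"
    using mono by (cases "q \<le> p") (auto simp: mono_def zero_le_mult_iff mult_le_0_iff)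
  then have same_sign: "\<bar>\<sigma> p - \<sigma> q\<bar> * \<bar>p - q\<bar> = (\<sigma> p - \<sigma> q) * (p - q)"
    by (simp add: abs_mult[symmetric])
  have "\<bar>\<sigma> p - \<sigma> q\<bar>\<^sup>2 \<le> \<bar>\<sigma> p - \<sigma> q\<bar> * (L * \<bar>p - q\<bar>)"
    unfolding power2_eq_square by (intro mult_left_mono lip) simp
  also have "\<dots> = L * (\<bar>\<sigma> p - \<sigma> q\<bar> * \<bar>p - q\<bar>)"
    by (simp only: ac_simps)
  finally show "\<bar>\<sigma> p - \<sigma> q\<bar>\<^sup>2 \<le> L * ((\<sigma> p - \<sigma> q) * (p - q))"
    by (simp only: same_sign)
qed

lemma cocoercive_componentwise:
  fixes f :: "real \<Rightarrow> real"
  assumes "cocoercive K f"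
  shows "cocoercive K (\<lambda>y::real^'n. \<chi> i. f (y $ i))"
  unfolding cocoercive_def
proof (intro allI)
  fix y z :: "real^'n"
  have "(norm ((\<chi> i. f (y $ i)) - (\<chi> i. f (z $ i))))\<^sup>2 = (\<Sum>i\<in>UNIV. (f (y $ i) - f (z $ i))\<^sup>2)"
    unfolding power2_norm_eq_inner inner_vec_def by (simp add: power2_eq_square)
  also have "\<dots> \<le> (\<Sum>i\<in>UNIV. K * ((f (y $ i) - f (z $ i)) * (y $ i - z $ i)))"
    using assms by (intro sum_mono) (simp add: cocoercive_def)
  also have "\<dots> = K * (((\<chi> i. f (y $ i)) - (\<chi> i. f (z $ i))) \<bullet> (y - z))"
    by (simp add: inner_vec_def sum_distrib_left)
  finally show "(norm ((\<chi> i. f (y $ i)) - (\<chi> i. f (z $ i))))\<^sup>2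
      \<le> K * (((\<chi> i. f (y $ i)) - (\<chi> i. f (z $ i))) \<bullet> (y - z))" .
qed

lemma spectral_norm_nonneg: "0 \<le> spectral_norm A"
  unfolding spectral_norm_def by (intro onorm_pos_le) simp

lemma norm_matrix_vector_le_spectral_norm: "norm (A *v x) \<le> spectral_norm A * norm x"
  unfolding spectral_norm_def by (intro onorm) simp

lemma norm_transpose_vector_le_spectral_norm:
  fixes A :: "real^'k^'n"
  shows "norm (transpose A *v w) \<le> spectral_norm A * norm w"
proof -
  let ?v = "transpose A *v w"
  have "norm ?v * norm ?v = w \<bullet> (A *v ?v)"
    by (simp add: dot_lmul_matrix[symmetric] flip: power2_eq_square power2_norm_eq_inner)
  also have "\<dots> \<le> norm w * norm (A *v ?v)"
    using Cauchy_Schwarz_ineq2 abs_ge_self order_trans by blast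
  also have "\<dots> \<le> norm w * (spectral_norm A * norm ?v)"
    by (intro mult_left_mono norm_matrix_vector_le_spectral_norm norm_ge_zero)
  finally have "norm ?v * norm ?v \<le> (spectral_norm A * norm w) * norm ?v"
    by (simp only: ac_simps)
  then show ?thesis
    using spectral_norm_nonneg[of A] by (cases "norm ?v = 0") (simp_all add: mult_le_cancel_right)
qed

lemma cocoercive_transpose_affine:
  fixes A :: "real^'k^'n"
  assumes "cocoercive K F"
  shows "cocoercive (K * (spectral_norm A)\<^sup>2) (\<lambda>x. transpose A *v F (A *v x + b))"
  unfolding cocoercive_def
proof (intro allI)
  fix x y :: "real^'k"
  define w where "w = F (A *v x + b) - F (A *v y + b)"
  have increment: "transpose A *v F (A *v x + b) - transpose A *v F (A *v y + b) = transpose A *v w"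
    by (simp add: w_def matrix_vector_mult_diff_distrib)
  have "(norm (transpose A *v w))\<^sup>2 \<le> (spectral_norm A)\<^sup>2 * (norm w)\<^sup>2"
    by (metis norm_transpose_vector_le_spectral_norm norm_ge_zero power_mono power_mult_distrib)
  also have "\<dots> \<le> (spectral_norm A)\<^sup>2 * (K * (w \<bullet> ((A *v x + b) - (A *v y + b))))"
  proof (rule mult_left_mono)
    show "(norm w)\<^sup>2 \<le> K * (w \<bullet> ((A *v x + b) - (A *v y + b)))"
      using assms unfolding cocoercive_def w_def by blast
  qed simp
  also have "\<dots> = K * (spectral_norm A)\<^sup>2 * ((transpose A *v w) \<bullet> (x - y))"
    by (simp add: dot_lmul_matrix matrix_vector_mult_diff_distrib)
  finally show "(norm (transpose A *v F (A *v x + b) - transpose A *v F (A *v y + b)))\<^sup>2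
      \<le> K * (spectral_norm A)\<^sup>2 * ((transpose A *v F (A *v x + b) - transpose A *v F (A *v y + b)) \<bullet> (x - y))"
    unfolding increment .
qed

lemma nonexpansive_diff_scaled_cocoercive:
  fixes G :: "'a::real_inner \<Rightarrow> 'a"
  assumes "cocoercive K G" and "0 \<le> K" and "0 \<le> c" and "c * K \<le> 2"
  shows "nonexpansive (\<lambda>x. x - c *\<^sub>R G x)"
  unfolding nonexpansive_def
proof (intro allI)
  fix x y :: 'a
  define d where "d = x - y"
  define v where "v = G x - G y"
  have "c * (norm v)\<^sup>2 \<le> c * K * (v \<bullet> d)"
    using assms(1,3) by (simp add: cocoercive_def v_def d_def mult_left_mono mult.assoc)
  also have "\<dots> \<le> 2 * (v \<bullet> d)"
    using cocoercive_inner_nonneg[OF assms(1,2)] assms(4) by (simp add: v_def d_def mult_right_mono)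
  finally have key: "c * (c * (norm v)\<^sup>2) \<le> c * (2 * (v \<bullet> d))"
    using assms(3) by (rule mult_left_mono)
  have "(norm ((x - c *\<^sub>R G x) - (y - c *\<^sub>R G y)))\<^sup>2 = (norm (d - c *\<^sub>R v))\<^sup>2"
    by (simp add: d_def v_def algebra_simps)
  also have "\<dots> = (norm d)\<^sup>2 - c * (2 * (v \<bullet> d)) + c * (c * (norm v)\<^sup>2)"
    by (simp add: power2_norm_eq_inner inner_diff_left inner_diff_right inner_commute algebra_simps)
  also have "\<dots> \<le> (norm d)\<^sup>2"
    using key by simp
  finally show "norm ((x - c *\<^sub>R G x) - (y - c *\<^sub>R G y)) \<le> norm (x - y)"
    unfolding d_def by (rule power2_le_imp_le) simp
qed

lemma averaged_diff_scaled_cocoercive: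
  assumes "cocoercive K G" and "0 \<le> K" and "0 \<le> h" and "0 < \<alpha>" and "h * K \<le> 2 * \<alpha>"
  shows "averaged \<alpha> (\<lambda>x. x - h *\<^sub>R G x)"
  unfolding averaged_def
proof (intro exI conjI)
  have "h / \<alpha> * K \<le> 2"
    using assms(4,5) by (simp add: divide_le_eq mult.commute mult.left_commute)
  then show "nonexpansive (\<lambda>x. x - (h / \<alpha>) *\<^sub>R G x)"
    using assms(1-4) by (intro nonexpansive_diff_scaled_cocoercive) simp_all
  show "(\<lambda>x. x - h *\<^sub>R G x) = (\<lambda>x. (1 - \<alpha>) *\<^sub>R x + \<alpha> *\<^sub>R (x - (h / \<alpha>) *\<^sub>R G x))"
  proof
    fix x
    have "\<alpha> *\<^sub>R (x - (h / \<alpha>) *\<^sub>R G x) = \<alpha> *\<^sub>R x - h *\<^sub>R G x"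
      using assms(4) by (simp add: scaleR_diff_right)
    then show "x - h *\<^sub>R G x = (1 - \<alpha>) *\<^sub>R x + \<alpha> *\<^sub>R (x - (h / \<alpha>) *\<^sub>R G x)"
      by (simp add: scaleR_diff_left)
  qed
qed

theorem mainTheorem3:
  fixes \<sigma> :: "real \<Rightarrow> real" and L h \<alpha> :: real
    and A :: "real^'k^'n" and b :: "real^'n"
  assumes mono: "mono \<sigma>"
    and L_pos: "L > 0"
    and lip: "\<And>s t. \<bar>\<sigma> s - \<sigma> t\<bar> \<le> L * \<bar>s - t\<bar>"
    and h_pos: "h > 0"
    and alpha: "0 < \<alpha>" "\<alpha> < 1"
    and step: "h * (spectral_norm A)\<^sup>2 \<le> 2 * \<alpha> / L"
  shows "averaged \<alpha> (\<lambda>x. x - h *\<^sub>R (transpose A *v (\<chi> i. \<sigma> ((A *v x + b) $ i))))"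
proof (rule averaged_diff_scaled_cocoercive)
  show "cocoercive (L * (spectral_norm A)\<^sup>2) (\<lambda>x. transpose A *v (\<chi> i. \<sigma> ((A *v x + b) $ i)))"
    by (intro cocoercive_transpose_affine cocoercive_componentwise mono_lipschitz_imp_cocoercive
        mono lip)
  show "h * (L * (spectral_norm A)\<^sup>2) \<le> 2 * \<alpha>"
    using step L_pos by (simp add: pos_le_divide_eq mult.left_commute mult.commute)
  show "0 \<le> L * (spectral_norm A)\<^sup>2"
    using L_pos by simp
qed (use h_pos alpha in simp_all)

end
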